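(* Every regular locally almost arcwise connected topological space is locally connected.
   Context: Two sets $A,B$ are joined by an arc in a set $S$ if there is a continuous $\gamma:[0,1]\to X$ with $\gamma([0,1])\subseteq S$, $\gamma(0)\in A$, $\gamma(1)\in B$. $X$ is locally almost arcwise connected at $x$ if for every neighborhood $V$ of $x$ there is a neighborhood $U\subseteq V$ of $x$ such that each pair of nonempty open subsets of $U$ can be joined by an arc in $\overline V$; locally almost arcwise connected means this holds at every point. *)

theory Defs
  imports "HOL-Analysis.Analysis"
begin

definition joined_by_arc_in :: "'a topology \<Rightarrow> 'a set \<Rightarrow> 'a set \<Rightarrow> 'a set \<Rightarrow> bool" where
  "joined_by_arc_in X S A B \<longleftrightarrow>
     (\<exists>g. pathin X g \<and> g ` {0..1} \<subseteq> S \<and> g 0 \<in> A \<and> g 1 \<in> B)"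

definition nbhd_of :: "'a topology \<Rightarrow> 'a \<Rightarrow> 'a set \<Rightarrow> bool" where
  "nbhd_of X x N \<longleftrightarrow> N \<subseteq> topspace X \<and> (\<exists>W. openin X W \<and> x \<in> W \<and> W \<subseteq> N)"

definition locally_almost_arcwise_connected_at :: "'a topology \<Rightarrow> 'a \<Rightarrow> bool" where
  "locally_almost_arcwise_connected_at X x \<longleftrightarrow>
     (\<forall>V. nbhd_of X x V \<longrightarrow>
        (\<exists>U. nbhd_of X x U \<and> U \<subseteq> V \<and>
           (\<forall>P Q. openin X P \<and> P \<noteq> {} \<and> P \<subseteq> U \<and>
                  openin X Q \<and> Q \<noteq> {} \<and> Q \<subseteq> U
                  \<longrightarrow> joined_by_arc_in X (X closure_of V) P Q)))"

definition locally_almost_arcwise_connected :: "'a topology \<Rightarrow> bool" where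
  "locally_almost_arcwise_connected X \<longleftrightarrow>
     (\<forall>x \<in> topspace X. locally_almost_arcwise_connected_at X x)"

end

theory Submission
  imports Defs
begin

text \<open>Regularity lets us shrink a neighbourhood of a point of an open set V to an open W
  whose closure stays in V. Almost arcwise connectedness then yields a neighbourhood of the point
  any two open pieces of which are joined by an arc inside V; such an arc cannot cross a clopen
  subset of V, so the whole neighbourhood lies in one quasi-component of V. Hence quasi-components
  of open subspaces are open, so they coincide with the connected components, and these being
  open is local connectedness.\<close>

lemma regular_space_open_closure_of_subset:
  assumes "regular_space X" "openin X V" "x \<in> V"
  obtains W where "openin X W" "x \<in> W" "X closure_of W \<subseteq> V"
  using assms neighbourhood_base_of_closedin[of X] unfolding neighbourhood_base_of
  by (meson closure_of_minimal order_trans)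

lemma locally_connected_space_if_openin_quasi_component_of:
  assumes "\<And>V x. openin X V \<Longrightarrow> x \<in> V \<Longrightarrow> openin X (quasi_component_of_set (subtopology X V) x)"
  shows "locally_connected_space X"
  unfolding locally_connected_space_eq_open_connected_component_of
proof (intro allI impI)
  fix V x
  assume V: "openin X V \<and> x \<in> V"
  define Y where "Y = subtopology X V"
  have "topspace Y = V"
    using V by (simp add: Y_def openin_subset Int_absorb1)
  then have "quasi_component_of_set Y x \<in> quasi_components_of Y"
    using V by (simp add: quasi_components_of_def)
  moreover have "openin Y (quasi_component_of_set Y x)"
    using assms V quasi_component_of_subset_topspace[of Y x] \<open>topspace Y = V\<close>
    by (simp add: Y_def openin_open_subtopology)
  ultimately have "connectedin Y (quasi_component_of_set Y x)"
    by (simp add: open_quasi_eq_connected_components_of connectedin_connected_components_of)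
  then have "connected_component_of_set Y x = quasi_component_of_set Y x"
    by (metis quasi_eq_connected_component_of_eq)
  then show "openin X (connected_component_of_set (subtopology X V) x)"
    using assms V by (simp add: Y_def)
qed

lemma subset_quasi_component_of_if_joined_by_arc_in:
  assumes "openin X V" "openin X U" "U \<subseteq> V" "S \<subseteq> V" "y \<in> U"
    and joined: "\<And>P Q. \<lbrakk>openin X P; P \<noteq> {}; P \<subseteq> U; openin X Q; Q \<noteq> {}; Q \<subseteq> U\<rbrakk>
                   \<Longrightarrow> joined_by_arc_in X S P Q"
  shows "U \<subseteq> quasi_component_of_set (subtopology X V) y"
proof
  fix z
  assume "z \<in> U"
  define Y where "Y = subtopology X V"
  have "topspace Y = V"
    using assms(1) by (simp add: Y_def openin_subset Int_absorb1)
  have "z \<in> T" if T: "y \<in> T" "closedin Y T" "openin Y T" for T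
  proof (rule ccontr)
    assume "z \<notin> T"
    have "openin X T"
      using T(3) assms(1) Y_def openin_trans_full by blast
    moreover have "openin X (V - T)"
      using T(2) assms(1) \<open>topspace Y = V\<close> openin_trans_full[of X V]
      by (metis Y_def closedin_def)
    ultimately have "joined_by_arc_in X S (U \<inter> T) (U \<inter> (V - T))"
      using joined assms(2) \<open>y \<in> U\<close> \<open>z \<in> U\<close> \<open>z \<notin> T\<close> T(1) \<open>U \<subseteq> V\<close> by blast
    then obtain g where g: "pathin X g" "g ` {0..1} \<subseteq> S" "g 0 \<in> U \<inter> T" "g 1 \<in> U \<inter> (V - T)"
      unfolding joined_by_arc_in_def by blast
    have "connectedin Y (g ` {0..1})"
      unfolding Y_def connectedin_subtopology
      using connectedin_path_image[OF g(1)] g(2) \<open>S \<subseteq> V\<close> by blast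
    then have "g ` {0..1} \<subseteq> T \<or> disjnt (g ` {0..1}) T"
      using T connectedin_clopen_cases by blast
    moreover have "g 0 \<in> g ` {0..1}" "g 1 \<in> g ` {0..1}"
      by auto
    ultimately show False
      using g(3,4) by (metis DiffD2 IntD2 disjnt_iff subsetD)
  qed
  then show "z \<in> quasi_component_of_set (subtopology X V) y"
    using \<open>topspace Y = V\<close> \<open>z \<in> U\<close> assms(3,5) by (auto simp: quasi_component_of Y_def)
qed

lemma openin_quasi_component_of_locally_almost_arcwise_connected:
  assumes "regular_space X" "locally_almost_arcwise_connected X" "openin X V"
  shows "openin X (quasi_component_of_set (subtopology X V) x)"
proof (subst openin_subopen, intro ballI)
  fix y
  assume y: "y \<in> quasi_component_of_set (subtopology X V) x"
  then have "y \<in> V"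
    using quasi_component_of_subset_topspace by fastforce
  then obtain W where W: "openin X W" "y \<in> W" "X closure_of W \<subseteq> V"
    by (rule regular_space_open_closure_of_subset[OF assms(1,3)])
  then have "nbhd_of X y W"
    by (auto simp: nbhd_of_def openin_subset)
  moreover have "locally_almost_arcwise_connected_at X y"
    using assms(2) W(1,2) openin_subset
    unfolding locally_almost_arcwise_connected_def by blast
  ultimately have "\<exists>U. nbhd_of X y U \<and> U \<subseteq> W \<and>
      (\<forall>P Q. openin X P \<and> P \<noteq> {} \<and> P \<subseteq> U \<and> openin X Q \<and> Q \<noteq> {} \<and> Q \<subseteq> U
             \<longrightarrow> joined_by_arc_in X (X closure_of W) P Q)"
    unfolding locally_almost_arcwise_connected_at_def by simp
  then obtain U where "nbhd_of X y U" "U \<subseteq> W"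
    and joined: "\<forall>P Q. openin X P \<and> P \<noteq> {} \<and> P \<subseteq> U \<and> openin X Q \<and> Q \<noteq> {} \<and> Q \<subseteq> U
                   \<longrightarrow> joined_by_arc_in X (X closure_of W) P Q"
    by (elim exE conjE)
  then obtain U0 where U0: "openin X U0" "y \<in> U0" "U0 \<subseteq> U"
    unfolding nbhd_of_def by blast
  have "U0 \<subseteq> V"
    using U0(3) \<open>U \<subseteq> W\<close> closure_of_subset[OF openin_subset[OF W(1)]] W(3) by blast
  have "U0 \<subseteq> quasi_component_of_set (subtopology X V) y"
  proof (rule subset_quasi_component_of_if_joined_by_arc_in[OF assms(3) U0(1) \<open>U0 \<subseteq> V\<close> W(3) U0(2)])
    show "joined_by_arc_in X (X closure_of W) P Q"
      if "openin X P" "P \<noteq> {}" "P \<subseteq> U0" "openin X Q" "Q \<noteq> {}" "Q \<subseteq> U0" for P Q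
      using joined that U0(3) by blast
  qed
  also have "\<dots> = quasi_component_of_set (subtopology X V) x"
    using y by (metis mem_Collect_eq quasi_component_of_equiv)
  finally show "\<exists>T. openin X T \<and> y \<in> T \<and> T \<subseteq> quasi_component_of_set (subtopology X V) x"
    using U0 by blast
qed

theorem mainTheorem12:
  fixes X :: "'a topology"
  assumes "regular_space X"
    and "locally_almost_arcwise_connected X"
  shows "locally_connected_space X"
  by (intro locally_connected_space_if_openin_quasi_component_of
      openin_quasi_component_of_locally_almost_arcwise_connected assms)

end
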